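(* Let $F$ be a field and $A$ a unital $F$-algebra. The following are equivalent: (i) $A$ is von-Neumann finite; (ii) every subalgebra of $A$ generated by at most two elements is von-Neumann finite; (iii) any two elements $a,b\in A$ with $ab\in F\setminus\{0\}$ (i.e. $ab$ a nonzero scalar multiple of $1$) commute. Likewise, the following are equivalent: (i') $A$ is reversible; (ii') every subalgebra of $A$ generated by at most two elements is reversible; (iii') any two elements $a,b\in A$ with $ab=0$ commute.
   Context: An $F$-algebra is a vector space with bilinear, not necessarily associative, multiplication; subalgebras are unital subalgebras. $A$ is von-Neumann finite if $ab=1$ implies $ba=1$, and reversible if $ab=0$ implies $ba=0$, for all $a,b\in A$. *)

theory Defs
  imports Main "HOL.Vector_Spaces"
begin

text \<open>A unital (not necessarily associative) algebra over a field: a vector space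
  given by the scalar multiplication scale, with a bilinear multiplication mul
  and a two-sided unit one.\<close>
definition unital_algebra ::
  "('f::field \<Rightarrow> 'a::ab_group_add \<Rightarrow> 'a) \<Rightarrow> ('a \<Rightarrow> 'a \<Rightarrow> 'a) \<Rightarrow> 'a \<Rightarrow> bool" where
  "unital_algebra scale mul one \<longleftrightarrow>
     vector_space scale \<and>
     (\<forall>x y z. mul (x + y) z = mul x z + mul y z) \<and>
     (\<forall>x y z. mul x (y + z) = mul x y + mul x z) \<and>
     (\<forall>c x y. mul (scale c x) y = scale c (mul x y)) \<and>
     (\<forall>c x y. mul x (scale c y) = scale c (mul x y)) \<and>
     (\<forall>x. mul one x = x \<and> mul x one = x)"

definition subalgebra ::
  "('f::field \<Rightarrow> 'a::ab_group_add \<Rightarrow> 'a) \<Rightarrow> ('a \<Rightarrow> 'a \<Rightarrow> 'a) \<Rightarrow> 'a \<Rightarrow> 'a set \<Rightarrow> bool" where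
  "subalgebra scale mul one S \<longleftrightarrow>
     module.subspace scale S \<and> one \<in> S \<and> (\<forall>x\<in>S. \<forall>y\<in>S. mul x y \<in> S)"

definition gen_subalgebra ::
  "('f::field \<Rightarrow> 'a::ab_group_add \<Rightarrow> 'a) \<Rightarrow> ('a \<Rightarrow> 'a \<Rightarrow> 'a) \<Rightarrow> 'a \<Rightarrow> 'a set \<Rightarrow> 'a set" where
  "gen_subalgebra scale mul one X = \<Inter>{S. subalgebra scale mul one S \<and> X \<subseteq> S}"

definition vN_finite_on :: "('a \<Rightarrow> 'a \<Rightarrow> 'a) \<Rightarrow> 'a \<Rightarrow> 'a set \<Rightarrow> bool" where
  "vN_finite_on mul one S \<longleftrightarrow> (\<forall>a\<in>S. \<forall>b\<in>S. mul a b = one \<longrightarrow> mul b a = one)"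

definition reversible_on :: "('a::zero \<Rightarrow> 'a \<Rightarrow> 'a) \<Rightarrow> 'a set \<Rightarrow> bool" where
  "reversible_on mul S \<longleftrightarrow> (\<forall>a\<in>S. \<forall>b\<in>S. mul a b = 0 \<longrightarrow> mul b a = 0)"

end

theory Submission
  imports Defs
begin

text \<open>Conditions (ii) and (ii') are equivalent to (i) and (i') simply because the subalgebra
  generated by \<open>a\<close> and \<open>b\<close> contains \<open>a\<close> and \<open>b\<close>, and both properties only ever talk about
  two elements at a time. For (iii), a relation \<open>a b = c\<close> with \<open>c \<noteq> 0\<close> becomes
  \<open>(c\<inverse> a) b = 1\<close> after rescaling, and von-Neumann finiteness then gives
  \<open>b (c\<inverse> a) = 1\<close>, i.e. \<open>b a = c = a b\<close>.\<close>

lemma gen_subalgebra_superset: "X \<subseteq> gen_subalgebra scale mul one X"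
  unfolding gen_subalgebra_def by blast

lemma vN_finite_on_subset: "vN_finite_on mul one T \<Longrightarrow> S \<subseteq> T \<Longrightarrow> vN_finite_on mul one S"
  unfolding vN_finite_on_def by blast

lemma reversible_on_subset: "reversible_on mul T \<Longrightarrow> S \<subseteq> T \<Longrightarrow> reversible_on mul S"
  unfolding reversible_on_def by blast

lemma vN_finite_on_UNIV_iff_pairs:
  "vN_finite_on mul one UNIV \<longleftrightarrow> (\<forall>a b. vN_finite_on mul one {a, b})"
  unfolding vN_finite_on_def by blast

lemma reversible_on_UNIV_iff_pairs:
  "reversible_on mul UNIV \<longleftrightarrow> (\<forall>a b. reversible_on mul {a, b})"
  unfolding reversible_on_def by blast

lemma vN_finite_on_UNIV_iff_two_generated:
  "vN_finite_on mul one UNIV \<longleftrightarrow>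
     (\<forall>a b. vN_finite_on mul one (gen_subalgebra scale mul one {a, b}))"
  by (metis vN_finite_on_UNIV_iff_pairs vN_finite_on_subset gen_subalgebra_superset subset_UNIV)

lemma reversible_on_UNIV_iff_two_generated:
  "reversible_on mul UNIV \<longleftrightarrow> (\<forall>a b. reversible_on mul (gen_subalgebra scale mul one {a, b}))"
  by (metis reversible_on_UNIV_iff_pairs reversible_on_subset gen_subalgebra_superset subset_UNIV)

lemma reversible_on_UNIV_iff_zero_divisors_commute:
  "reversible_on mul UNIV \<longleftrightarrow> (\<forall>a b. mul a b = 0 \<longrightarrow> mul a b = mul b a)"
  unfolding reversible_on_def by auto

lemma unital_algebra_mul_eq_scalar_iff:
  assumes "unital_algebra scale mul one" and "c \<noteq> 0"
  shows "mul a b = scale c one \<longleftrightarrow> mul (scale (inverse c) a) b = one"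
    and "mul b a = scale c one \<longleftrightarrow> mul b (scale (inverse c) a) = one"
proof -
  interpret vector_space scale
    using assms(1) unfolding unital_algebra_def by blast
  have mul_scale: "mul (scale d x) y = scale d (mul x y)" "mul x (scale d y) = scale d (mul x y)"
    for d x y using assms(1) unfolding unital_algebra_def by auto
  have unscale: "scale (inverse c) z = one \<longleftrightarrow> z = scale c one" for z
    using \<open>c \<noteq> 0\<close> by (metis left_inverse right_inverse scale_one scale_scale)
  show "mul a b = scale c one \<longleftrightarrow> mul (scale (inverse c) a) b = one"
    and "mul b a = scale c one \<longleftrightarrow> mul b (scale (inverse c) a) = one"
    by (simp_all only: mul_scale unscale)
qed

lemma vN_finite_on_UNIV_iff_scalar_products_commute:
  assumes "unital_algebra scale mul one"
  shows "vN_finite_on mul one UNIV \<longleftrightarrow>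
           (\<forall>a b. (\<exists>c. c \<noteq> 0 \<and> mul a b = scale c one) \<longrightarrow> mul a b = mul b a)"
proof
  assume vN: "vN_finite_on mul one UNIV"
  show "\<forall>a b. (\<exists>c. c \<noteq> 0 \<and> mul a b = scale c one) \<longrightarrow> mul a b = mul b a"
  proof (intro allI impI)
    fix a b
    assume "\<exists>c. c \<noteq> 0 \<and> mul a b = scale c one"
    then obtain c where "c \<noteq> 0" and ab: "mul a b = scale c one" by blast
    note rescale = unital_algebra_mul_eq_scalar_iff[OF assms \<open>c \<noteq> 0\<close>]
    have "mul (scale (inverse c) a) b = one" using ab rescale(1) by blast
    then have "mul b (scale (inverse c) a) = one" using vN unfolding vN_finite_on_def by blast
    then have "mul b a = scale c one" using rescale(2) by blast
    with ab show "mul a b = mul b a" by simp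
  qed
next
  assume "\<forall>a b. (\<exists>c. c \<noteq> 0 \<and> mul a b = scale c one) \<longrightarrow> mul a b = mul b a"
  moreover have "scale 1 one = one"
    using assms unfolding unital_algebra_def by (simp add: vector_space.vector_space_assms(4))
  ultimately show "vN_finite_on mul one UNIV"
    unfolding vN_finite_on_def by (metis one_neq_zero)
qed

theorem lemma3p3:
  fixes scale :: "'f::field \<Rightarrow> 'a::ab_group_add \<Rightarrow> 'a"
    and mul :: "'a \<Rightarrow> 'a \<Rightarrow> 'a" and one :: 'a
  assumes "unital_algebra scale mul one"
  shows "(vN_finite_on mul one UNIV \<longleftrightarrow>
            (\<forall>a b. vN_finite_on mul one (gen_subalgebra scale mul one {a, b})))
       \<and> (vN_finite_on mul one UNIV \<longleftrightarrow>
            (\<forall>a b. (\<exists>c. c \<noteq> 0 \<and> mul a b = scale c one) \<longrightarrow> mul a b = mul b a))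
       \<and> (reversible_on mul UNIV \<longleftrightarrow>
            (\<forall>a b. reversible_on mul (gen_subalgebra scale mul one {a, b})))
       \<and> (reversible_on mul UNIV \<longleftrightarrow>
            (\<forall>a b. mul a b = 0 \<longrightarrow> mul a b = mul b a))"
  using vN_finite_on_UNIV_iff_two_generated[of mul one scale]
    vN_finite_on_UNIV_iff_scalar_products_commute[OF assms]
    reversible_on_UNIV_iff_two_generated[of mul scale one]
    reversible_on_UNIV_iff_zero_divisors_commute[of mul]
  by (intro conjI)

end
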